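(* For every $n\ge2$, the identity $x^2=x^3$ holds in the inverse semigroup $(S_n,\cdot,{}^{-1})$.
   Context: For $n\ge2$, $(S_n,\cdot,{}^{-1})$ is the inverse semigroup of partial one-to-one transformations of $\{0,1,\dots,3n+2\}$ (acting on the right, composition $x(\alpha\beta)=(x\alpha)\beta$) generated by the partial maps $\chi:\ n\mapsto 2n+1,\ n+1\mapsto 2n+2$ and, for $i=1,\dots,n$, $\chi_i:\ i-1\mapsto i,\ n+1+i\mapsto n+i,\ 2n+1+i\mapsto 2n+2+i$ (each undefined elsewhere). *)

theory Defs
  imports Main
begin

(* Partial one-to-one transformations are modelled as partial maps
  nat => nat option.  Maps act on the right: x(ab) = (xa)b,
  so the product a.b is map composition b o_m a. *)

definition pmul :: "(nat \<rightharpoonup> nat) \<Rightarrow> (nat \<rightharpoonup> nat) \<Rightarrow> (nat \<rightharpoonup> nat)" where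
  "pmul \<alpha> \<beta> = \<beta> \<circ>\<^sub>m \<alpha>"

definition pinv :: "(nat \<rightharpoonup> nat) \<Rightarrow> (nat \<rightharpoonup> nat)" where
  "pinv \<alpha> = (\<lambda>y. if \<exists>x. \<alpha> x = Some y then Some (THE x. \<alpha> x = Some y) else None)"

definition gen_chi :: "nat \<Rightarrow> (nat \<rightharpoonup> nat)" where
  "gen_chi n = [n \<mapsto> 2*n+1, n+1 \<mapsto> 2*n+2]"

definition gen_chi_i :: "nat \<Rightarrow> nat \<Rightarrow> (nat \<rightharpoonup> nat)" where
  "gen_chi_i n i = [i-1 \<mapsto> i, n+1+i \<mapsto> n+i, 2*n+1+i \<mapsto> 2*n+2+i]"

inductive_set S :: "nat \<Rightarrow> (nat \<rightharpoonup> nat) set" for n :: nat where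
  gen_chi: "gen_chi n \<in> S n"
| gen_chi_i: "1 \<le> i \<Longrightarrow> i \<le> n \<Longrightarrow> gen_chi_i n i \<in> S n"
| mul: "\<alpha> \<in> S n \<Longrightarrow> \<beta> \<in> S n \<Longrightarrow> pmul \<alpha> \<beta> \<in> S n"
| inv: "\<alpha> \<in> S n \<Longrightarrow> pinv \<alpha> \<in> S n"

end

theory Submission
  imports Defs
begin

text \<open>
  After reversing the middle block \<open>n+1, \<dots>, 2n+1\<close> of points, every generator becomes a
  partial translation by \<open>+1\<close> of the integer line whose domain is one of a few fixed
  blocks, so every element of \<open>S n\<close> is a partial translation by some \<open>k\<close>.
  Following two distinct points of its domain along a word shows that they can only be
  displaced jointly by \<open>k = 0\<close>, by a single step \<open>\<plusminus>1\<close> out of (into) a common block, or by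
  \<open>k\<close> with \<open>|k| \<le> n\<close> when they are at distance \<open>2n+2\<close>.
  No block contains two adjacent points, so \<open>x p = q\<close> and \<open>q \<in> dom x\<close> force \<open>p = q\<close>,
  which is exactly \<open>x\<^sup>2 = x\<^sup>3\<close>.
\<close>

lemma pmul_eq_Some: "pmul x y p = Some r \<longleftrightarrow> (\<exists>q. x p = Some q \<and> y q = Some r)"
  by (auto simp: pmul_def map_comp_Some_iff)

lemma pinv_eq_Some:
  assumes "inj_on x (dom x)"
  shows "pinv x y = Some z \<longleftrightarrow> x z = Some y"
proof -
  have "(THE w. x w = Some y) = v" if "x v = Some y" for v
    using that assms by (auto intro!: the_equality simp: inj_on_def dom_def)
  then show ?thesis
    unfolding pinv_def by (metis option.distinct(1) option.inject)
qed

lemma pmul_square_eq_cube: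
  assumes "\<And>p q r. x p = Some q \<Longrightarrow> x q = Some r \<Longrightarrow> p = q"
  shows "pmul x x = pmul (pmul x x) x"
proof
  fix p
  show "pmul x x p = pmul (pmul x x) x p"
  proof (cases "pmul x x p")
    case None
    then show ?thesis by (simp add: pmul_def)
  next
    case (Some r)
    then obtain q where "x p = Some q" "x q = Some r" by (auto simp: pmul_eq_Some)
    moreover from this have "p = q" by (rule assms)
    ultimately show ?thesis by (simp add: pmul_def)
  qed
qed

text \<open>Reversing the middle block turns every generator into a partial translation by \<open>+1\<close>.\<close>

definition line_pos :: "nat \<Rightarrow> nat \<Rightarrow> int" where
  "line_pos n p = (if n < p \<and> p \<le> 2*n+1 then int (3*n+2) - int p else int p)"

lemma line_pos_inj: "line_pos n p = line_pos n q \<Longrightarrow> p = q"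
  by (auto simp: line_pos_def split: if_splits)

text \<open>The domains of \<open>gen_chi n\<close> and of the \<open>gen_chi_i n (j+1)\<close> in line coordinates.\<close>

definition line_blocks :: "nat \<Rightarrow> int set set" where
  "line_blocks n = insert {int n, 2*int n+1} ((\<lambda>j. {j, 2*int n-j, 2*int n+2+j}) ` {0..int n-1})"

definition co_moved :: "nat \<Rightarrow> int \<Rightarrow> int \<Rightarrow> bool" where
  "co_moved n a b \<longleftrightarrow> (\<exists>B\<in>line_blocks n. a \<in> B \<and> b \<in> B)"

definition admissible_shift :: "nat \<Rightarrow> int \<Rightarrow> int \<Rightarrow> int \<Rightarrow> bool" where
  "admissible_shift n a b k \<longleftrightarrow> k = 0
     \<or> (\<bar>a-b\<bar> = 2*int n+2 \<and> min a b \<in> {0..int n} \<and> min a b + k \<in> {0..int n})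
     \<or> (k = 1 \<and> co_moved n a b) \<or> (k = -1 \<and> co_moved n (a-1) (b-1))"

lemma co_moved_far_apart:
  "co_moved n a b \<Longrightarrow> \<bar>a-b\<bar> = 2*int n+2 \<Longrightarrow> min a b \<in> {0..int n-1}"
  unfolding co_moved_def line_blocks_def by auto

lemma co_moved_not_adjacent: "n \<ge> 1 \<Longrightarrow> co_moved n a b \<Longrightarrow> \<bar>a-b\<bar> \<noteq> 1"
  unfolding co_moved_def line_blocks_def by (auto; presburger)

lemma co_moved_twice:
  "n \<ge> 2 \<Longrightarrow> a \<noteq> b \<Longrightarrow> co_moved n a b \<Longrightarrow> co_moved n (a+1) (b+1) \<Longrightarrow>
    \<bar>a-b\<bar> = 2*int n+2 \<and> min a b \<in> {0..int n-2}"
  unfolding co_moved_def line_blocks_def by (safe; simp_all; linarith)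

lemma admissible_shift_inverse:
  "admissible_shift n a b k \<Longrightarrow> admissible_shift n (a+k) (b+k) (-k)"
  unfolding admissible_shift_def by (auto simp: min_def)

lemma admissible_shift_compose:
  assumes "n \<ge> 2" "a \<noteq> b" "admissible_shift n a b k" "admissible_shift n (a+k) (b+k) l"
  shows "admissible_shift n a b (k+l)"
proof -
  have shifted_min: "min (a+k) (b+k) = min a b + k" by (simp add: min_def)
  from assms(3) consider "k = 0"
    | (far) "\<bar>a-b\<bar> = 2*int n+2" "min a b \<in> {0..int n}" "min a b + k \<in> {0..int n}"
    | (up) "k = 1" "co_moved n a b" | (down) "k = -1" "co_moved n (a-1) (b-1)"
    unfolding admissible_shift_def by blast
  then show ?thesis
  proof cases
    case 1
    then show ?thesis using assms(4) by simp
  next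
    case far
    then show ?thesis
      using assms(4) shifted_min co_moved_far_apart[of n "a+k" "b+k"]
        co_moved_far_apart[of n "a+k-1" "b+k-1"]
      unfolding admissible_shift_def by (auto simp: min_def)
  next
    case up
    then show ?thesis
      using assms(1,2,4) shifted_min co_moved_far_apart[of n a b] co_moved_twice[of n a b]
      unfolding admissible_shift_def by auto
  next
    case down
    then show ?thesis
      using assms(1,2,4) co_moved_far_apart[of n "a-1" "b-1"] co_moved_twice[of n "a-2" "b-2"]
      unfolding admissible_shift_def by (auto simp: min_def algebra_simps)
  qed
qed

lemma not_admissible_shift_onto:
  "n \<ge> 1 \<Longrightarrow> k \<noteq> 0 \<Longrightarrow> \<not> admissible_shift n a (a+k) k"
  using co_moved_not_adjacent[of n a "a+1"] co_moved_not_adjacent[of n "a-1" "a-2"]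
  unfolding admissible_shift_def by (auto simp: min_def)

definition admissible_translation :: "nat \<Rightarrow> int \<Rightarrow> (nat \<rightharpoonup> nat) \<Rightarrow> bool" where
  "admissible_translation n k x \<longleftrightarrow>
     (\<forall>p p'. x p = Some p' \<longrightarrow> line_pos n p' = line_pos n p + k)
     \<and> (\<forall>p\<in>dom x. \<forall>q\<in>dom x. p \<noteq> q \<longrightarrow> admissible_shift n (line_pos n p) (line_pos n q) k)"

lemma admissible_translation_inj_on:
  "admissible_translation n k x \<Longrightarrow> inj_on x (dom x)"
  unfolding admissible_translation_def inj_on_def by (metis add_right_cancel domD line_pos_inj)

lemma admissible_translation_pinv:
  assumes "admissible_translation n k x"
  shows "admissible_translation n (-k) (pinv x)"
proof -
  have pinv_x: "pinv x y = Some z \<longleftrightarrow> x z = Some y" for y z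
    using pinv_eq_Some[OF admissible_translation_inj_on[OF assms]] .
  have "line_pos n y' = line_pos n y - k" if "pinv x y = Some y'" for y y'
    using that assms unfolding pinv_x admissible_translation_def by force
  moreover have "admissible_shift n (line_pos n y) (line_pos n z) (-k)"
    if "y \<in> dom (pinv x)" "z \<in> dom (pinv x)" "y \<noteq> z" for y z
  proof -
    from that(1,2) obtain y' z' where "pinv x y = Some y'" "pinv x z = Some z'"
      by auto
    then have "x y' = Some y" "x z' = Some z"
      by (simp_all add: pinv_x)
    moreover from this have "y' \<noteq> z'"
      using \<open>y \<noteq> z\<close> by auto
    ultimately have "admissible_shift n (line_pos n y') (line_pos n z') k"
      and "line_pos n y = line_pos n y' + k" "line_pos n z = line_pos n z' + k"
      using assms unfolding admissible_translation_def by blast+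
    then show ?thesis
      by (metis admissible_shift_inverse)
  qed
  ultimately show ?thesis
    unfolding admissible_translation_def by auto
qed

lemma admissible_translation_pmul:
  assumes "n \<ge> 2" "admissible_translation n k x" "admissible_translation n l y"
  shows "admissible_translation n (k+l) (pmul x y)"
proof -
  have "line_pos n r = line_pos n p + (k+l)" if "pmul x y p = Some r" for p r
    using that assms(2,3) unfolding pmul_eq_Some admissible_translation_def by force
  moreover have "admissible_shift n (line_pos n p) (line_pos n q) (k+l)"
    if "p \<in> dom (pmul x y)" "q \<in> dom (pmul x y)" "p \<noteq> q" for p q
  proof -
    from that(1,2) obtain p' q'
      where p': "x p = Some p'" "p' \<in> dom y" and q': "x q = Some q'" "q' \<in> dom y"
      by (auto simp: pmul_eq_Some dom_def)
    have "p' \<noteq> q'"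
      using admissible_translation_inj_on[OF assms(2)] p'(1) q'(1) \<open>p \<noteq> q\<close>
      by (metis domI inj_onD)
    with assms(2,3) p' q' that have "admissible_shift n (line_pos n p) (line_pos n q) k"
      and "admissible_shift n (line_pos n p') (line_pos n q') l"
      and "line_pos n p' = line_pos n p + k" "line_pos n q' = line_pos n q + k"
      unfolding admissible_translation_def by blast+
    moreover have "line_pos n p \<noteq> line_pos n q"
      using \<open>p \<noteq> q\<close> line_pos_inj by blast
    ultimately show ?thesis
      using admissible_shift_compose[OF assms(1)] by metis
  qed
  ultimately show ?thesis
    unfolding admissible_translation_def by auto
qed

lemma admissible_translation_unit_step:
  assumes "B \<in> line_blocks n"
    and "\<And>p p'. x p = Some p' \<Longrightarrow> line_pos n p' = line_pos n p + 1 \<and> line_pos n p \<in> B"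
  shows "admissible_translation n 1 x"
  using assms unfolding admissible_translation_def admissible_shift_def co_moved_def dom_def by blast

lemma admissible_translation_S:
  assumes "x \<in> S n" "n \<ge> 2"
  shows "\<exists>k. admissible_translation n k x"
  using assms(1)
proof induction
  case gen_chi
  have "{int n, 2*int n+1} \<in> line_blocks n"
    unfolding line_blocks_def by simp
  moreover have "line_pos n p' = line_pos n p + 1 \<and> line_pos n p \<in> {int n, 2*int n+1}"
    if "gen_chi n p = Some p'" for p p'
    using that by (auto simp: gen_chi_def line_pos_def split: if_splits)
  ultimately show ?case
    using admissible_translation_unit_step by blast
next
  case (gen_chi_i i)
  let ?B = "{int i-1, 2*int n-(int i-1), 2*int n+2+(int i-1)}"
  have "?B \<in> line_blocks n"
    using gen_chi_i unfolding line_blocks_def by auto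
  moreover have "line_pos n p' = line_pos n p + 1 \<and> line_pos n p \<in> ?B"
    if "gen_chi_i n i p = Some p'" for p p'
    using that gen_chi_i by (auto simp: gen_chi_i_def line_pos_def split: if_splits)
  ultimately show ?case
    using admissible_translation_unit_step by blast
next
  case mul
  with assms(2) show ?case by (blast intro: admissible_translation_pmul)
next
  case inv
  then show ?case by (blast intro: admissible_translation_pinv)
qed

lemma admissible_translation_no_chain:
  assumes "n \<ge> 1" "admissible_translation n k x" "x p = Some q" "x q = Some r"
  shows "p = q"
proof (rule ccontr)
  assume "p \<noteq> q"
  have step: "line_pos n q = line_pos n p + k"
    using assms(2,3) unfolding admissible_translation_def by blast
  with \<open>p \<noteq> q\<close> have "k \<noteq> 0"
    using line_pos_inj by force
  moreover have "admissible_shift n (line_pos n p) (line_pos n q) k"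
    using assms(2-4) \<open>p \<noteq> q\<close> unfolding admissible_translation_def by blast
  ultimately show False
    using not_admissible_shift_onto[OF assms(1)] step by metis
qed

theorem corollary5p2:
  fixes n :: nat and x :: "nat \<rightharpoonup> nat"
  assumes "n \<ge> 2" and "x \<in> S n"
  shows "pmul x x = pmul (pmul x x) x"
proof -
  obtain k where "admissible_translation n k x"
    using admissible_translation_S assms by blast
  moreover have "n \<ge> 1"
    using assms(1) by simp
  ultimately show ?thesis
    by (blast intro: pmul_square_eq_cube admissible_translation_no_chain)
qed

end
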